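(* Let $U$ be an infinite uniquely $2$-divisible group, $\nu$ an involutory almost regular automorphism of $U$, $G=U\rtimes\langle\nu\rangle$, and let $A$ be an infinite abelian subgroup of $U$ which is inverted by $\nu$ and maximal (with respect to inclusion) among abelian subgroups of $U$ inverted by $\nu$. For $u\in U$ let $A_u$ be the subgroup of $A$ consisting of the elements inverted by the involution $u\nu u^{-1}\in G$. Then $|A:A_u|<\infty$ for every $u\in U$.
   Context: An automorphism $\nu$ is involutory if $\nu\ne\mathrm{id}$ and $\nu^2=\mathrm{id}$, and almost regular if $C_U(\nu)$ is finite. A group is uniquely $2$-divisible if every element has a unique square root. $G$ is the semidirect product of $U$ by $\langle\nu\rangle$, with $U,\nu$ identified with their images in $G$. A subgroup is inverted by an element $t$ if $t^{-1}xt=x^{-1}$ for all its elements $x$. (Such a maximal infinite $A$ exists by Zorn's lemma and the existence of an infinite abelian subgroup inverted by $\nu$.) *)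

theory Defs
  imports "HOL-Algebra.Algebra"
begin

text \<open>Semidirect product U \<rtimes> <nu> with nu an involutory automorphism.
Elements are pairs (u, s) standing for u * nu^s (s = True meaning nu^1).
Multiplication: (a, s)(b, t) = (a * nu^s(b), s xor t).\<close>
definition semidirect_inv :: "('a, 'b) monoid_scheme \<Rightarrow> ('a \<Rightarrow> 'a) \<Rightarrow> ('a \<times> bool) monoid" where
  "semidirect_inv U \<nu> =
     \<lparr> carrier = carrier U \<times> UNIV,
       monoid.mult = (\<lambda>(a, s) (b, t). (a \<otimes>\<^bsub>U\<^esub> (if s then \<nu> b else b), s \<noteq> t)),
       monoid.one = (\<one>\<^bsub>U\<^esub>, False) \<rparr>"

definition emb_U :: "'a \<Rightarrow> 'a \<times> bool" where "emb_U u = (u, False)"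

definition emb_nu :: "('a, 'b) monoid_scheme \<Rightarrow> 'a \<times> bool" where "emb_nu U = (\<one>\<^bsub>U\<^esub>, True)"

definition inverted_by :: "('c, 'd) monoid_scheme \<Rightarrow> 'c \<Rightarrow> 'c set \<Rightarrow> bool" where
  "inverted_by G t S \<longleftrightarrow> (\<forall>x\<in>S. inv\<^bsub>G\<^esub> t \<otimes>\<^bsub>G\<^esub> x \<otimes>\<^bsub>G\<^esub> t = inv\<^bsub>G\<^esub> x)"

definition abelian_subgroup :: "'a set \<Rightarrow> ('a, 'b) monoid_scheme \<Rightarrow> bool" where
  "abelian_subgroup A U \<longleftrightarrow> subgroup A U \<and> (\<forall>x\<in>A. \<forall>y\<in>A. x \<otimes>\<^bsub>U\<^esub> y = y \<otimes>\<^bsub>U\<^esub> x)"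

definition uniquely_2_divisible :: "('a, 'b) monoid_scheme \<Rightarrow> bool" where
  "uniquely_2_divisible U \<longleftrightarrow> (\<forall>x\<in>carrier U. \<exists>!y. y \<in> carrier U \<and> y \<otimes>\<^bsub>U\<^esub> y = x)"

definition involutory_aut :: "('a, 'b) monoid_scheme \<Rightarrow> ('a \<Rightarrow> 'a) \<Rightarrow> bool" where
  "involutory_aut U \<nu> \<longleftrightarrow> \<nu> \<in> iso U U \<and> (\<exists>x\<in>carrier U. \<nu> x \<noteq> x) \<and> (\<forall>x\<in>carrier U. \<nu> (\<nu> x) = x)"

definition almost_regular :: "('a, 'b) monoid_scheme \<Rightarrow> ('a \<Rightarrow> 'a) \<Rightarrow> bool" where
  "almost_regular U \<nu> \<longleftrightarrow> finite {x \<in> carrier U. \<nu> x = x}"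

end

theory Submission
  imports Defs
begin

(*
  For u in U put
  y = u nu(u^-1); then t = u nu u^-1 = y nu, nu(y) = y^-1, and an element of A is
  inverted by t iff it commutes with y.  So A_u = A \<inter> C(y), and we must show
  that C(y) has finite index in A.

  For b in A let d(b) = sqrt(b y^-1 b) b^-1.  Then d(b)^-1 nu(d(b)) = y, i.e.
  d(b) conjugates nu to t, and all such conjugators form one coset of C_U(nu),
  a finite set.  Moreover b^-1 d b d = y^-1 for d = d(b); if d(b) = d(b') this
  forces b' b^-1 to commute with d, b and hence with y, so b and b' lie in the
  same coset of A_u.  Hence the cosets of A_u are at most |C_U(nu)| many.
*)

lemma (in group) mult_inv_cancel_left [simp]:
  "x \<in> carrier G \<Longrightarrow> z \<in> carrier G \<Longrightarrow> x \<otimes> (inv x \<otimes> z) = z"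
  using m_assoc[of x "inv x" z] by simp

lemma (in group) inv_mult_cancel_left [simp]:
  "x \<in> carrier G \<Longrightarrow> z \<in> carrier G \<Longrightarrow> inv x \<otimes> (x \<otimes> z) = z"
  using m_assoc[of "inv x" x z] by simp

definition centralizer :: "('a, 'b) monoid_scheme \<Rightarrow> 'a \<Rightarrow> 'a set" where
  "centralizer G y = {x \<in> carrier G. y \<otimes>\<^bsub>G\<^esub> x = x \<otimes>\<^bsub>G\<^esub> y}"

lemma (in group) centralizer_subgroup:
  assumes y: "y \<in> carrier G"
  shows "subgroup (centralizer G y) G"
proof (rule subgroupI)
  show "centralizer G y \<subseteq> carrier G" "centralizer G y \<noteq> {}"
    using y by (auto simp: centralizer_def)
next
  fix x assume "x \<in> centralizer G y"
  then have "x \<in> carrier G" "y \<otimes> x = x \<otimes> y" by (auto simp: centralizer_def)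
  then have "inv x \<otimes> y = y \<otimes> inv x"
    using y by (metis inv_solve_left inv_solve_right m_assoc inv_closed m_closed)
  then show "inv x \<in> centralizer G y"
    using \<open>x \<in> carrier G\<close> by (simp add: centralizer_def)
next
  fix x z assume "x \<in> centralizer G y" "z \<in> centralizer G y"
  then show "x \<otimes> z \<in> centralizer G y"
    using y by (simp add: centralizer_def) (metis m_assoc)
qed

lemma centralizer_sym:
  "x \<in> carrier G \<Longrightarrow> y \<in> carrier G \<Longrightarrow> x \<in> centralizer G y \<longleftrightarrow> y \<in> centralizer G x"
  by (auto simp: centralizer_def)

lemma (in group) conj_inv_eq_inv_iff:
  assumes a: "a \<in> carrier G" and y: "y \<in> carrier G"
  shows "y \<otimes> inv a \<otimes> inv y = inv a \<longleftrightarrow> y \<otimes> a = a \<otimes> y"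
proof -
  have "y \<otimes> inv a \<otimes> inv y = inv (y \<otimes> a \<otimes> inv y)"
    using a y by (simp add: inv_mult_group m_assoc)
  then have "y \<otimes> inv a \<otimes> inv y = inv a \<longleftrightarrow> y \<otimes> a \<otimes> inv y = a"
    using a y inv_inj by (auto simp: inj_on_def)
  also have "\<dots> \<longleftrightarrow> y \<otimes> a = a \<otimes> y"
    using a y by (simp add: inv_solve_right')
  finally show ?thesis .
qed

lemma (in group) commutes_with_twisted_product:
  assumes b: "b \<in> carrier G" "b' \<in> carrier G" and d: "d \<in> carrier G"
    and comm: "b \<otimes> b' = b' \<otimes> b"
    and eq: "inv b \<otimes> d \<otimes> b \<otimes> d = inv b' \<otimes> d \<otimes> b' \<otimes> d"
  shows "inv b \<otimes> d \<otimes> b \<otimes> d \<in> centralizer G (b' \<otimes> inv b)"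
proof -
  let ?C = "centralizer G (b' \<otimes> inv b)"
  interpret C: subgroup ?C G using centralizer_subgroup b by simp
  have conj: "inv b \<otimes> d \<otimes> b = inv b' \<otimes> d \<otimes> b'"
    using eq b d by simp
  have "b' \<otimes> inv b \<otimes> d = b' \<otimes> (inv b \<otimes> d \<otimes> b) \<otimes> inv b"
    using b d by (simp add: m_assoc)
  also have "\<dots> = d \<otimes> (b' \<otimes> inv b)"
    unfolding conj using b d by (simp add: m_assoc)
  finally have "d \<in> ?C" using b d unfolding centralizer_def by blast
  moreover have "(b' \<otimes> inv b) \<otimes> b = b \<otimes> (b' \<otimes> inv b)"
  proof -
    have "b \<otimes> (b' \<otimes> inv b) = (b \<otimes> b') \<otimes> inv b" using b by (simp add: m_assoc)
    also have "\<dots> = b'" unfolding comm using b by (simp add: m_assoc)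
    finally show ?thesis using b by (simp add: m_assoc)
  qed
  then have "b \<in> ?C" using b unfolding centralizer_def by blast
  ultimately show ?thesis using b d by (simp add: C.m_inv_closed C.m_closed)
qed

definition group_sqrt :: "('a, 'b) monoid_scheme \<Rightarrow> 'a \<Rightarrow> 'a" where
  "group_sqrt G x = (THE r. r \<in> carrier G \<and> r \<otimes>\<^bsub>G\<^esub> r = x)"

lemma (in group) group_sqrt:
  assumes "uniquely_2_divisible G" "x \<in> carrier G"
  shows "group_sqrt G x \<in> carrier G" "group_sqrt G x \<otimes> group_sqrt G x = x"
  using theI'[OF assms(1)[unfolded uniquely_2_divisible_def, rule_format, OF assms(2)]]
  by (simp_all add: group_sqrt_def)

lemma (in group) group_sqrt_unique:
  assumes "uniquely_2_divisible G" "r \<in> carrier G" "r \<otimes> r = x"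
  shows "group_sqrt G x = r"
  using assms unfolding uniquely_2_divisible_def group_sqrt_def
  by (blast intro: the1_equality)

lemma (in group) group_sqrt_inv:
  assumes "uniquely_2_divisible G" "x \<in> carrier G"
  shows "group_sqrt G (inv x) = inv (group_sqrt G x)"
  using assms group_sqrt[OF assms] by (intro group_sqrt_unique) (auto simp flip: inv_mult_group)

lemma (in group) endomorphism_group_sqrt:
  assumes "uniquely_2_divisible G" "\<nu> \<in> hom G G" "x \<in> carrier G"
  shows "\<nu> (group_sqrt G x) = group_sqrt G (\<nu> x)"
proof -
  interpret group_hom G G \<nu> using assms(2) by (simp add: group_hom_def group_hom_axioms_def is_group)
  show ?thesis
    using assms group_sqrt[OF assms(1,3)]
    by (intro group_sqrt_unique[symmetric]) (auto simp flip: hom_mult)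
qed

(* The elements z with z^-1 nu(z) = y form a right coset of the fixed points
   of nu, hence a finite set when nu is almost regular. *)
lemma (in group) twisted_fibre_finite:
  assumes hom: "\<nu> \<in> hom G G" and fin_fix: "finite {x \<in> carrier G. \<nu> x = x}"
  shows "finite {z \<in> carrier G. inv z \<otimes> \<nu> z = y}"
proof (cases "{z \<in> carrier G. inv z \<otimes> \<nu> z = y} = {}")
  case False
  then obtain z0 where z0: "z0 \<in> carrier G" "inv z0 \<otimes> \<nu> z0 = y" by blast
  interpret group_hom G G \<nu> using hom by (simp add: group_hom_def group_hom_axioms_def is_group)
  have "{z \<in> carrier G. inv z \<otimes> \<nu> z = y} \<subseteq> (\<lambda>c. c \<otimes> z0) ` {x \<in> carrier G. \<nu> x = x}"
  proof
    fix z assume "z \<in> {z \<in> carrier G. inv z \<otimes> \<nu> z = y}"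
    then have z: "z \<in> carrier G" "inv z \<otimes> \<nu> z = y" by auto
    have "\<nu> (z \<otimes> inv z0) = z \<otimes> (inv z \<otimes> \<nu> z) \<otimes> inv (\<nu> z0)"
      using z(1) z0(1) by (simp add: m_assoc)
    also have "\<dots> = z \<otimes> (inv z0 \<otimes> \<nu> z0) \<otimes> inv (\<nu> z0)"
      using z(2) z0(2) by simp
    also have "\<dots> = z \<otimes> inv z0"
      using z(1) z0(1) by (simp add: m_assoc)
    finally have "z \<otimes> inv z0 \<in> {x \<in> carrier G. \<nu> x = x}" using z z0 by simp
    moreover have "z = (z \<otimes> inv z0) \<otimes> z0" using z z0 by (simp add: m_assoc)
    ultimately show "z \<in> (\<lambda>c. c \<otimes> z0) ` {x \<in> carrier G. \<nu> x = x}" by blast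
  qed
  then show ?thesis using fin_fix finite_subset by blast
qed (metis finite.emptyI)

(* If nu inverts b and y, the element d = sqrt(b y^-1 b) b^-1 lies in the
   twisted fibre over y and satisfies b^-1 d b d = y^-1. *)
lemma (in group) twisted_conjugator_exists:
  assumes div: "uniquely_2_divisible G" and hom: "\<nu> \<in> hom G G"
    and b: "b \<in> carrier G" "\<nu> b = inv b" and y: "y \<in> carrier G" "\<nu> y = inv y"
  shows "\<exists>d\<in>carrier G. inv d \<otimes> \<nu> d = y \<and> inv b \<otimes> d \<otimes> b \<otimes> d = inv y"
proof -
  interpret group_hom G G \<nu> using hom by (simp add: group_hom_def group_hom_axioms_def is_group)
  define x where "x = b \<otimes> inv y \<otimes> b"
  define s where "s = group_sqrt G x"
  have x: "x \<in> carrier G" using b y by (simp add: x_def)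
  have s: "s \<in> carrier G" "s \<otimes> s = x" using group_sqrt[OF div x] by (simp_all add: s_def)
  have "\<nu> x = inv x" using b y by (simp add: x_def inv_mult_group m_assoc)
  then have ns: "\<nu> s = inv s"
    unfolding s_def using div hom x by (simp add: endomorphism_group_sqrt group_sqrt_inv)
  define d where "d = s \<otimes> inv b"
  have "inv d \<otimes> \<nu> d = b \<otimes> (inv s \<otimes> inv s) \<otimes> b"
    using b s(1) ns by (simp add: d_def inv_mult_group m_assoc)
  also have "\<dots> = b \<otimes> inv x \<otimes> b"
    using s inv_mult_group[of s s] by simp
  also have "\<dots> = y"
    using b y by (simp add: x_def inv_mult_group m_assoc)
  finally have "inv d \<otimes> \<nu> d = y" .
  moreover have "inv b \<otimes> d \<otimes> b \<otimes> d = inv b \<otimes> (s \<otimes> s) \<otimes> inv b"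
    using b s(1) by (simp add: d_def m_assoc)
  then have "inv b \<otimes> d \<otimes> b \<otimes> d = inv y"
    using b y unfolding s(2) x_def by (simp add: m_assoc)
  moreover have "d \<in> carrier G" using b s by (simp add: d_def)
  ultimately show ?thesis by blast
qed

lemma finite_image_coarser:
  assumes "finite (f ` A)" and "\<And>b b'. b \<in> A \<Longrightarrow> b' \<in> A \<Longrightarrow> f b = f b' \<Longrightarrow> g b = g b'"
  shows "finite (g ` A)"
proof -
  have "g ` A = (\<lambda>c. g (inv_into A f c)) ` f ` A"
    unfolding image_image
  proof (rule image_cong[OF refl])
    fix b assume "b \<in> A"
    then show "g b = g (inv_into A f (f b))"
      by (intro assms(2)) (simp_all add: inv_into_into f_inv_into_f)
  qed
  then show ?thesis using assms(1) by simp
qed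

(* Abstract form of the theorem: the centralizer of y has finite index in A,
   the cosets being distinguished by the finitely many conjugators d(b). *)
theorem (in group) centralizer_finite_index:
  assumes div: "uniquely_2_divisible G" and hom: "\<nu> \<in> hom G G"
    and fin_fix: "finite {x \<in> carrier G. \<nu> x = x}"
    and A: "subgroup A G" "\<forall>a\<in>A. \<forall>b\<in>A. a \<otimes> b = b \<otimes> a"
    and A_inverted: "\<forall>a\<in>A. \<nu> a = inv a"
    and y: "y \<in> carrier G" "\<nu> y = inv y"
  shows "finite ((\<lambda>b. (A \<inter> centralizer G y) #> b) ` A)"
proof -
  let ?H = "A \<inter> centralizer G y"
  have H: "subgroup ?H G"
    using A(1) centralizer_subgroup[OF y(1)] by (rule subgroups_Inter_pair)
  have A_carrier: "A \<subseteq> carrier G" using A(1) by (rule subgroup.subset)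
  obtain d where d: "\<And>b. b \<in> A \<Longrightarrow>
      d b \<in> carrier G \<and> inv (d b) \<otimes> \<nu> (d b) = y \<and> inv b \<otimes> d b \<otimes> b \<otimes> d b = inv y"
    using twisted_conjugator_exists[OF div hom _ _ y] A_inverted A_carrier by (metis subsetD)
  have "d ` A \<subseteq> {z \<in> carrier G. inv z \<otimes> \<nu> z = y}" using d by auto
  then have "finite (d ` A)" using twisted_fibre_finite[OF hom fin_fix] by (rule finite_subset)
  moreover have "?H #> b = ?H #> b'" if b: "b \<in> A" "b' \<in> A" and same: "d b = d b'" for b b'
  proof -
    have bc: "b \<in> carrier G" "b' \<in> carrier G" using b A_carrier by auto
    have "inv y \<in> centralizer G (b' \<otimes> inv b)"
      using commutes_with_twisted_product[OF bc, of "d b"] d[OF b(1)] d[OF b(2)] same A(2) b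
      by metis
    then have "y \<in> centralizer G (b' \<otimes> inv b)"
      using centralizer_subgroup[of "b' \<otimes> inv b"] bc y(1) subgroup.m_inv_closed by fastforce
    moreover have "b' \<otimes> inv b \<in> A"
      using A(1) b by (simp add: subgroup.m_closed subgroup.m_inv_closed)
    ultimately have "b' \<otimes> inv b \<in> ?H"
      using centralizer_sym[of "b' \<otimes> inv b" G y] bc y(1) by auto
    then have "b' \<in> ?H #> b" using subgroup.rcos_module_rev[OF H is_group] bc by blast
    then show ?thesis using repr_independence bc H by blast
  qed
  ultimately show ?thesis by (rule finite_image_coarser)
qed

locale group_involution = group_hom G G \<nu> for G (structure) and \<nu> +
  assumes involutive: "x \<in> carrier G \<Longrightarrow> \<nu> (\<nu> x) = x"

lemma semidirect_inv_mult [simp]: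
  "(a, s) \<otimes>\<^bsub>semidirect_inv U \<nu>\<^esub> (b, t) = (a \<otimes>\<^bsub>U\<^esub> (if s then \<nu> b else b), s \<noteq> t)"
  by (simp add: semidirect_inv_def)

lemma semidirect_inv_one [simp]: "\<one>\<^bsub>semidirect_inv U \<nu>\<^esub> = (\<one>\<^bsub>U\<^esub>, False)"
  by (simp add: semidirect_inv_def)

lemma semidirect_inv_carrier [simp]: "carrier (semidirect_inv U \<nu>) = carrier U \<times> UNIV"
  by (simp add: semidirect_inv_def)

lemma (in group_involution) semidirect_inv_group: "group (semidirect_inv G \<nu>)"
proof (rule groupI)
  fix x y z
  assume "x \<in> carrier (semidirect_inv G \<nu>)" "y \<in> carrier (semidirect_inv G \<nu>)"
    "z \<in> carrier (semidirect_inv G \<nu>)"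
  then show "x \<otimes>\<^bsub>semidirect_inv G \<nu>\<^esub> y \<otimes>\<^bsub>semidirect_inv G \<nu>\<^esub> z =
      x \<otimes>\<^bsub>semidirect_inv G \<nu>\<^esub> (y \<otimes>\<^bsub>semidirect_inv G \<nu>\<^esub> z)"
    by (cases x; cases y; cases z) (auto simp: involutive m_assoc)
next
  fix x assume "x \<in> carrier (semidirect_inv G \<nu>)"
  then obtain a s where x: "x = (a, s)" "a \<in> carrier G" by (cases x) auto
  show "\<exists>y\<in>carrier (semidirect_inv G \<nu>). y \<otimes>\<^bsub>semidirect_inv G \<nu>\<^esub> x = \<one>\<^bsub>semidirect_inv G \<nu>\<^esub>"
    using x by (intro bexI[of _ "(if s then \<nu> (inv a) else inv a, s)"]) (auto simp flip: hom_mult)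
qed auto

lemma (in group_involution) semidirect_inv_inv:
  assumes "a \<in> carrier G"
  shows "inv\<^bsub>semidirect_inv G \<nu>\<^esub> (a, s) = (if s then \<nu> (inv a) else inv a, s)"
  using assms by (intro group.inv_equality[OF semidirect_inv_group]) (auto simp flip: hom_mult)

lemma (in group_involution) inverted_by_twisted_iff:
  assumes "y \<in> carrier G" "a \<in> carrier G"
  shows "inverted_by (semidirect_inv G \<nu>) (y, True) {(a, False)} \<longleftrightarrow> \<nu> (inv y \<otimes> a \<otimes> y) = inv a"
  using assms by (simp add: inverted_by_def semidirect_inv_inv)

lemma (in group_involution) twisted_inverted_elements:
  assumes y: "y \<in> carrier G" "\<nu> y = inv y"
    and A: "A \<subseteq> carrier G" "\<forall>a\<in>A. \<nu> a = inv a"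
  shows "{a \<in> A. inverted_by (semidirect_inv G \<nu>) (y, True) {(a, False)}} = A \<inter> centralizer G y"
proof -
  have "inverted_by (semidirect_inv G \<nu>) (y, True) {(a, False)} \<longleftrightarrow> y \<otimes> a = a \<otimes> y"
    if a: "a \<in> A" for a
  proof -
    have ac: "a \<in> carrier G" using a A(1) by blast
    have "\<nu> (inv y \<otimes> a \<otimes> y) = y \<otimes> inv a \<otimes> inv y"
      using ac y A(2) a by simp
    then show ?thesis using inverted_by_twisted_iff[OF y(1) ac] conj_inv_eq_inv_iff[OF ac y(1)] by simp
  qed
  then show ?thesis using A(1) by (auto simp: centralizer_def)
qed

lemma rcosets_of_subgroup_structure:
  "rcosets\<^bsub>G\<lparr>carrier := A\<rparr>\<^esub> H = (\<lambda>b. H #>\<^bsub>G\<^esub> b) ` A"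
  by (auto simp: RCOSETS_def r_coset_def)

theorem proposition3p5:
  fixes U :: "('a, 'b) monoid_scheme" and \<nu> :: "'a \<Rightarrow> 'a" and A :: "'a set"
  defines "G \<equiv> semidirect_inv U \<nu>"
  assumes "group U"
    and "infinite (carrier U)"
    and "uniquely_2_divisible U"
    and "involutory_aut U \<nu>"
    and "almost_regular U \<nu>"
    and "abelian_subgroup A U"
    and "infinite A"
    and "inverted_by G (emb_nu U) (emb_U ` A)"
    and "\<forall>B. abelian_subgroup B U \<and> inverted_by G (emb_nu U) (emb_U ` B) \<and> A \<subseteq> B \<longrightarrow> B = A"
    and "u \<in> carrier U"
  shows "finite (rcosets\<^bsub>U\<lparr>carrier := A\<rparr>\<^esub>
           {a \<in> A. inverted_by G (emb_U u \<otimes>\<^bsub>G\<^esub> emb_nu U \<otimes>\<^bsub>G\<^esub> emb_U (inv\<^bsub>U\<^esub> u)) {emb_U a}})"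
proof -
  interpret U: group_involution U \<nu>
    using assms(2,5) by (auto simp: group_involution_def group_involution_axioms_def
        involutory_aut_def iso_def group_hom_def group_hom_axioms_def)
  have hom: "\<nu> \<in> hom U U" by (rule U.homh)
  have A: "subgroup A U" "\<forall>a\<in>A. \<forall>b\<in>A. a \<otimes>\<^bsub>U\<^esub> b = b \<otimes>\<^bsub>U\<^esub> a"
    using assms(7) by (auto simp: abelian_subgroup_def)
  have A_carrier: "A \<subseteq> carrier U" using A(1) by (rule subgroup.subset)
  have A_inverted: "\<forall>a\<in>A. \<nu> a = inv\<^bsub>U\<^esub> a"
    using assms(9) A_carrier U.inverted_by_twisted_iff[of "\<one>\<^bsub>U\<^esub>"]
    by (auto simp: inverted_by_def G_def emb_nu_def emb_U_def)
  (* The conjugate u nu u^-1 of nu is y nu with y inverted by nu. *)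
  define y where "y = u \<otimes>\<^bsub>U\<^esub> \<nu> (inv\<^bsub>U\<^esub> u)"
  have y: "y \<in> carrier U" "\<nu> y = inv\<^bsub>U\<^esub> y"
    using assms(11) by (simp_all add: y_def U.involutive U.inv_mult_group)
  have "emb_U u \<otimes>\<^bsub>G\<^esub> emb_nu U \<otimes>\<^bsub>G\<^esub> emb_U (inv\<^bsub>U\<^esub> u) = (y, True)"
    using assms(11) by (simp add: G_def emb_U_def emb_nu_def y_def)
  then have "{a \<in> A. inverted_by G (emb_U u \<otimes>\<^bsub>G\<^esub> emb_nu U \<otimes>\<^bsub>G\<^esub> emb_U (inv\<^bsub>U\<^esub> u)) {emb_U a}}
      = A \<inter> centralizer U y"
    using U.twisted_inverted_elements[OF y A_carrier A_inverted] by (simp add: G_def emb_U_def)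
  moreover have "finite ((\<lambda>b. (A \<inter> centralizer U y) #>\<^bsub>U\<^esub> b) ` A)"
    using assms(4,6) by (intro U.centralizer_finite_index[OF _ hom _ A A_inverted y])
      (simp_all add: almost_regular_def)
  ultimately show ?thesis by (simp add: rcosets_of_subgroup_structure)
qed

end
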